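(* Let $U:\mathbb{C}^*\to\mathbb{C}$ be a reasonable expansion with unique restrictions, between locally small categories, which has the expansion property, and assume that all morphisms in $\mathbb{C}$ are monomorphisms and that $\mathbb{C}^*$ is directed. Then for every $A\in\mathrm{Ob}(\mathbb{C})$, $$t_{\mathbb{C}}(A)=\sum_{\mathcal{A}\in U^{-1}(A)}t_{\mathbb{C}^*}(\mathcal{A}).$$ Consequently, $t_{\mathbb{C}}(A)$ is finite if and only if $U^{-1}(A)$ is finite and $t_{\mathbb{C}^*}(\mathcal{A})<\infty$ for all $\mathcal{A}\in U^{-1}(A)$.
   Context: Write $X\to Y$ if $\hom(X,Y)\ne\varnothing$; a category is directed if for all objects $A,B$ there is $C$ with $A\to C$, $B\to C$. An expansion of $\mathbb{C}$ is a category $\mathbb{C}^*$ with a functor $U:\mathbb{C}^*\to\mathbb{C}$ surjective on objects and injective on hom-sets; we regard $\hom_{\mathbb{C}^*}(\mathcal{A},\mathcal{B})\subseteq\hom_{\mathbb{C}}(U\mathcal{A},U\mathcal{B})$, and $U^{-1}(A)=\{\mathcal{A}:U(\mathcal{A})=A\}$. $U$ is reasonable if for every $e\in\hom(A,B)$ and $\mathcal{A}\in U^{-1}(A)$ there is $\mathcal{B}\in U^{-1}(B)$ with $e\in\hom(\mathcal{A},\mathcal{B})$; it has unique restrictions if for every $\mathcal{B}$ and $e\in\hom(A,U(\mathcal{B}))$ there is exactly one $\mathcal{A}\in U^{-1}(A)$ with $e\in\hom(\mathcal{A},\mathcal{B})$; it has the expansion property if for every $A\in\mathrm{Ob}(\mathbb{C})$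 there is $B\in\mathrm{Ob}(\mathbb{C})$ with $\mathcal{A}\to\mathcal{B}$ for all $\mathcal{A}\in U^{-1}(A)$, $\mathcal{B}\in U^{-1}(B)$. In a category $\mathbb{D}$: $C\to(B)^A_{k,t}$ means that for every $\chi:\hom(A,C)\to\{0,\dots,k-1\}$ there is $w\in\hom(B,C)$ with $|\chi(w\cdot\hom(A,B))|\le t$; $t_{\mathbb{D}}(A)$ is the least positive $n$ such that for all $k\ge2$ and all $B$ there is $C$ with $C\to(B)^A_{k,n}$, and $\infty$ otherwise. A sum with an infinite term or infinitely many terms is $\infty$. *)

theory Defs
  imports Main "HOL-Library.Extended_Nat"
begin

text \<open>A (locally small) category is given by a set of objects Ob, hom-sets
  hom A B, a composition cmp g f (first f, then g) and identities idm A.\<close>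

definition category ::
  "'o set \<Rightarrow> ('o \<Rightarrow> 'o \<Rightarrow> 'm set) \<Rightarrow> ('m \<Rightarrow> 'm \<Rightarrow> 'm) \<Rightarrow> ('o \<Rightarrow> 'm) \<Rightarrow> bool" where
  "category Ob hom cmp idm \<longleftrightarrow>
     (\<forall>A\<in>Ob. \<forall>B\<in>Ob. \<forall>C\<in>Ob. \<forall>f\<in>hom A B. \<forall>g\<in>hom B C. cmp g f \<in> hom A C) \<and>
     (\<forall>A\<in>Ob. \<forall>B\<in>Ob. \<forall>C\<in>Ob. \<forall>D\<in>Ob. \<forall>f\<in>hom A B. \<forall>g\<in>hom B C. \<forall>h\<in>hom C D.
        cmp h (cmp g f) = cmp (cmp h g) f) \<and>
     (\<forall>A\<in>Ob. idm A \<in> hom A A) \<and>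
     (\<forall>A\<in>Ob. \<forall>B\<in>Ob. \<forall>f\<in>hom A B. cmp f (idm A) = f \<and> cmp (idm B) f = f)"

definition arr :: "('o \<Rightarrow> 'o \<Rightarrow> 'm set) \<Rightarrow> 'o \<Rightarrow> 'o \<Rightarrow> bool" where
  "arr hom X Y \<longleftrightarrow> hom X Y \<noteq> {}"

definition directed :: "'o set \<Rightarrow> ('o \<Rightarrow> 'o \<Rightarrow> 'm set) \<Rightarrow> bool" where
  "directed Ob hom \<longleftrightarrow> (\<forall>A\<in>Ob. \<forall>B\<in>Ob. \<exists>C\<in>Ob. arr hom A C \<and> arr hom B C)"

definition all_mono ::
  "'o set \<Rightarrow> ('o \<Rightarrow> 'o \<Rightarrow> 'm set) \<Rightarrow> ('m \<Rightarrow> 'm \<Rightarrow> 'm) \<Rightarrow> bool" where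
  "all_mono Ob hom cmp \<longleftrightarrow>
     (\<forall>A\<in>Ob. \<forall>B\<in>Ob. \<forall>f\<in>hom A B. \<forall>X\<in>Ob. \<forall>g\<in>hom X A. \<forall>h\<in>hom X A.
        cmp f g = cmp f h \<longrightarrow> g = h)"

text \<open>Expansion: C* = (Ob', hom', same composition, identities idm (U a)),
  with hom' a b a subset of hom (U a) (U b) (so U is the inclusion on hom-sets,
  hence injective on hom-sets), U surjective on objects.\<close>

definition expansion ::
  "'o set \<Rightarrow> ('o \<Rightarrow> 'o \<Rightarrow> 'm set) \<Rightarrow> ('m \<Rightarrow> 'm \<Rightarrow> 'm) \<Rightarrow> ('o \<Rightarrow> 'm) \<Rightarrow>
   'p set \<Rightarrow> ('p \<Rightarrow> 'p \<Rightarrow> 'm set) \<Rightarrow> ('p \<Rightarrow> 'o) \<Rightarrow> bool" where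
  "expansion Ob hom cmp idm Ob' hom' U \<longleftrightarrow>
     category Ob hom cmp idm \<and> category Ob' hom' cmp (\<lambda>a. idm (U a)) \<and>
     U ` Ob' = Ob \<and> (\<forall>a\<in>Ob'. \<forall>b\<in>Ob'. hom' a b \<subseteq> hom (U a) (U b))"

definition fiber :: "'p set \<Rightarrow> ('p \<Rightarrow> 'o) \<Rightarrow> 'o \<Rightarrow> 'p set" where
  "fiber Ob' U A = {a\<in>Ob'. U a = A}"

definition reasonable ::
  "'o set \<Rightarrow> ('o \<Rightarrow> 'o \<Rightarrow> 'm set) \<Rightarrow> 'p set \<Rightarrow> ('p \<Rightarrow> 'p \<Rightarrow> 'm set) \<Rightarrow> ('p \<Rightarrow> 'o) \<Rightarrow> bool" where
  "reasonable Ob hom Ob' hom' U \<longleftrightarrow>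
     (\<forall>A\<in>Ob. \<forall>B\<in>Ob. \<forall>e\<in>hom A B. \<forall>a\<in>fiber Ob' U A. \<exists>b\<in>fiber Ob' U B. e \<in> hom' a b)"

definition unique_restrictions ::
  "'o set \<Rightarrow> ('o \<Rightarrow> 'o \<Rightarrow> 'm set) \<Rightarrow> 'p set \<Rightarrow> ('p \<Rightarrow> 'p \<Rightarrow> 'm set) \<Rightarrow> ('p \<Rightarrow> 'o) \<Rightarrow> bool" where
  "unique_restrictions Ob hom Ob' hom' U \<longleftrightarrow>
     (\<forall>b\<in>Ob'. \<forall>A\<in>Ob. \<forall>e\<in>hom A (U b). \<exists>!a. a \<in> fiber Ob' U A \<and> e \<in> hom' a b)"

definition expansion_property ::
  "'o set \<Rightarrow> 'p set \<Rightarrow> ('p \<Rightarrow> 'p \<Rightarrow> 'm set) \<Rightarrow> ('p \<Rightarrow> 'o) \<Rightarrow> bool" where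
  "expansion_property Ob Ob' hom' U \<longleftrightarrow>
     (\<forall>A\<in>Ob. \<exists>B\<in>Ob. \<forall>a\<in>fiber Ob' U A. \<forall>b\<in>fiber Ob' U B. arr hom' a b)"

definition ramsey_arrow ::
  "('o \<Rightarrow> 'o \<Rightarrow> 'm set) \<Rightarrow> ('m \<Rightarrow> 'm \<Rightarrow> 'm) \<Rightarrow> 'o \<Rightarrow> 'o \<Rightarrow> 'o \<Rightarrow> nat \<Rightarrow> nat \<Rightarrow> bool" where
  "ramsey_arrow hom cmp C B A k t \<longleftrightarrow>
     (\<forall>\<chi> :: 'm \<Rightarrow> nat. \<chi> ` hom A C \<subseteq> {..<k} \<longrightarrow>
        (\<exists>w\<in>hom B C. card (\<chi> ` ((\<lambda>e. cmp w e) ` hom A B)) \<le> t))"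

definition ramsey_good ::
  "'o set \<Rightarrow> ('o \<Rightarrow> 'o \<Rightarrow> 'm set) \<Rightarrow> ('m \<Rightarrow> 'm \<Rightarrow> 'm) \<Rightarrow> 'o \<Rightarrow> nat \<Rightarrow> bool" where
  "ramsey_good Ob hom cmp A n \<longleftrightarrow>
     (\<forall>k\<ge>2. \<forall>B\<in>Ob. \<exists>C\<in>Ob. ramsey_arrow hom cmp C B A k n)"

definition ramsey_degree ::
  "'o set \<Rightarrow> ('o \<Rightarrow> 'o \<Rightarrow> 'm set) \<Rightarrow> ('m \<Rightarrow> 'm \<Rightarrow> 'm) \<Rightarrow> 'o \<Rightarrow> enat" where
  "ramsey_degree Ob hom cmp A =
     (if \<exists>n>0. ramsey_good Ob hom cmp A n
      then enat (LEAST n. n > 0 \<and> ramsey_good Ob hom cmp A n) else \<infinity>)"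

definition esum :: "('a \<Rightarrow> enat) \<Rightarrow> 'a set \<Rightarrow> enat" where
  "esum f S = (if finite S then sum f S else \<infinity>)"

end

theory Submission
  imports Defs
begin

text \<open>By unique restrictions, hom(A, U b) is the disjoint union of the sets hom(a, b) over the
  expansions a of A. For the upper bound, the Ramsey properties of the finitely many a are applied
  one after the other, producing a single arrow on which each hom(a, b) receives at most t(a)
  colours. For the lower bound, colourings showing that a needs t(a) colours are moved to one
  common object b by directedness and glued into a colouring of hom(A, U c) that records, for
  each arrow, its restriction a and its colour; by the expansion property every copy of U b lies
  inside a copy of an expansion of b, where the glued colours of different a are disjoint, so
  at least the sum of the t(a) colours occurs.\<close>

lemma esum_less_infinity_iff:
  "esum t S < \<infinity> \<longleftrightarrow> finite S \<and> (\<forall>x\<in>S. t x < \<infinity>)"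
proof (cases "finite S")
  case True
  then show ?thesis
    unfolding esum_def by (induction S rule: finite_induct) (auto simp: plus_eq_infty_iff_enat)
qed (simp add: esum_def)

lemma esum_eq_enat_sum:
  assumes "finite S" "\<forall>x\<in>S. t x < \<infinity>"
  shows "esum t S = enat (\<Sum>x\<in>S. the_enat (t x))"
proof -
  have "t x = enat (the_enat (t x))" if "x \<in> S" for x
    using assms(2) that by auto
  then have "esum t S = (\<Sum>x\<in>S. of_nat (the_enat (t x)))"
    unfolding esum_def of_nat_eq_enat using assms(1) by (simp cong: sum.cong)
  then show ?thesis
    by (metis of_nat_eq_enat of_nat_sum)
qed

lemma sum_card_le_card_tagged:
  assumes "finite T" "finite G" "\<forall>a\<in>G. (\<lambda>y. Some (a, y)) ` Y a \<subseteq> T"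
  shows "(\<Sum>a\<in>G. card (Y a)) \<le> card T"
proof -
  have "finite (Y a)" if "a \<in> G" for a
    using finite_subset[OF assms(3)[rule_format, OF that] assms(1)]
    by (rule finite_imageD) (simp add: inj_on_def)
  then have "(\<Sum>a\<in>G. card (Y a)) = card (SIGMA a:G. Y a)"
    by (intro card_SigmaI[OF assms(2), symmetric] ballI)
  also have "\<dots> = card (Some ` (SIGMA a:G. Y a))"
    by (rule card_image[symmetric]) simp
  also have "\<dots> \<le> card T"
    using assms(3) by (intro card_mono[OF assms(1)]) blast
  finally show ?thesis .
qed

lemma ramsey_degree_le:
  assumes "0 < n" "ramsey_good Ob hom cmp A n"
  shows "ramsey_degree Ob hom cmp A \<le> enat n"
  using assms unfolding ramsey_degree_def by (auto intro: Least_le)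

lemma ramsey_degree_enatD:
  assumes "ramsey_degree Ob hom cmp A = enat n"
  shows "0 < n" "ramsey_good Ob hom cmp A n"
proof -
  have ex: "\<exists>n>0. ramsey_good Ob hom cmp A n"
    using assms unfolding ramsey_degree_def by (auto split: if_splits)
  then have n: "n = (LEAST n. n > 0 \<and> ramsey_good Ob hom cmp A n)"
    using assms unfolding ramsey_degree_def by simp
  from LeastI_ex[OF ex] show "0 < n" "ramsey_good Ob hom cmp A n"
    unfolding n[symmetric] by blast+
qed

lemma ramsey_degree_pos: "0 < ramsey_degree Ob hom cmp A"
proof (cases "ramsey_degree Ob hom cmp A")
  case (enat n)
  then show ?thesis using ramsey_degree_enatD(1)[OF enat] by (simp add: zero_enat_def)
qed simp

definition forces_colours ::
  "'o set \<Rightarrow> ('o \<Rightarrow> 'o \<Rightarrow> 'm set) \<Rightarrow> ('m \<Rightarrow> 'm \<Rightarrow> 'm) \<Rightarrow>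
   'o \<Rightarrow> 'o \<Rightarrow> nat \<Rightarrow> nat \<Rightarrow> bool" where
  "forces_colours Ob hom cmp A B k s \<longleftrightarrow>
     (\<forall>C\<in>Ob. \<exists>\<chi> :: 'm \<Rightarrow> nat. \<chi> ` hom A C \<subseteq> {..<k} \<and>
        (\<forall>w\<in>hom B C. s \<le> card (\<chi> ` cmp w ` hom A B)))"

lemma not_ramsey_good_forces_colours:
  assumes "\<not> ramsey_good Ob hom cmp A n"
  shows "\<exists>k. \<exists>B\<in>Ob. forces_colours Ob hom cmp A B k (Suc n)"
proof -
  obtain k B where B: "B \<in> Ob" and no_arrow: "\<forall>C\<in>Ob. \<not> ramsey_arrow hom cmp C B A k n"
    using assms unfolding ramsey_good_def by blast
  have "forces_colours Ob hom cmp A B k (Suc n)"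
    unfolding forces_colours_def
  proof
    fix C assume "C \<in> Ob"
    with no_arrow obtain \<chi> where
      "\<chi> ` hom A C \<subseteq> {..<k}" "\<forall>w\<in>hom B C. n < card (\<chi> ` cmp w ` hom A B)"
      unfolding ramsey_arrow_def by (auto simp: not_le)
    then show "\<exists>\<chi>. \<chi> ` hom A C \<subseteq> {..<k} \<and>
        (\<forall>w\<in>hom B C. Suc n \<le> card (\<chi> ` cmp w ` hom A B))"
      by (intro exI[of _ \<chi>]) (simp add: Suc_le_eq)
  qed
  with B show ?thesis by blast
qed

definition multi_ramsey_arrow ::
  "('o \<Rightarrow> 'o \<Rightarrow> 'm set) \<Rightarrow> ('m \<Rightarrow> 'm \<Rightarrow> 'm) \<Rightarrow>
   'o \<Rightarrow> 'o \<Rightarrow> 'o set \<Rightarrow> nat \<Rightarrow> nat \<Rightarrow> bool" where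
  "multi_ramsey_arrow hom cmp C B As k t \<longleftrightarrow>
     (\<forall>\<chi> :: 'm \<Rightarrow> nat. \<chi> ` (\<Union>A\<in>As. hom A C) \<subseteq> {..<k} \<longrightarrow>
        (\<exists>w\<in>hom B C. card (\<chi> ` cmp w ` (\<Union>A\<in>As. hom A B)) \<le> t))"

locale cat =
  fixes Ob :: "'o set" and hom :: "'o \<Rightarrow> 'o \<Rightarrow> 'm set"
    and cmp :: "'m \<Rightarrow> 'm \<Rightarrow> 'm" and idm :: "'o \<Rightarrow> 'm"
  assumes category: "category Ob hom cmp idm"
begin

lemma comp_in_hom:
  "\<lbrakk>A \<in> Ob; B \<in> Ob; C \<in> Ob; f \<in> hom A B; g \<in> hom B C\<rbrakk> \<Longrightarrow> cmp g f \<in> hom A C"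
  using category unfolding category_def by blast

lemma comp_image_hom:
  "\<lbrakk>A \<in> Ob; B \<in> Ob; C \<in> Ob; g \<in> hom B C\<rbrakk> \<Longrightarrow> cmp g ` hom A B \<subseteq> hom A C"
  using comp_in_hom by blast

lemma comp_assoc:
  assumes "A \<in> Ob" "B \<in> Ob" "C \<in> Ob" "D \<in> Ob" "f \<in> hom A B" "g \<in> hom B C" "h \<in> hom C D"
  shows "cmp h (cmp g f) = cmp (cmp h g) f"
proof -
  have "\<forall>A\<in>Ob. \<forall>B\<in>Ob. \<forall>C\<in>Ob. \<forall>D\<in>Ob. \<forall>f\<in>hom A B. \<forall>g\<in>hom B C. \<forall>h\<in>hom C D.
          cmp h (cmp g f) = cmp (cmp h g) f"
    using category unfolding category_def by (elim conjE)
  with assms show ?thesis by blast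
qed

lemma id_in_hom: "A \<in> Ob \<Longrightarrow> idm A \<in> hom A A"
  using category unfolding category_def by blast

lemma arr_trans: "\<lbrakk>A \<in> Ob; B \<in> Ob; C \<in> Ob; arr hom A B; arr hom B C\<rbrakk> \<Longrightarrow> arr hom A C"
  unfolding arr_def using comp_in_hom by blast

lemma directed_ex_common_target:
  assumes "directed Ob hom" "finite S" "S \<subseteq> Ob" "Ob \<noteq> {}"
  shows "\<exists>C\<in>Ob. \<forall>A\<in>S. arr hom A C"
  using assms(2,3)
proof (induction S rule: finite_induct)
  case empty
  then show ?case using assms(4) by blast
next
  case (insert A S)
  then obtain C where C: "C \<in> Ob" "\<forall>A'\<in>S. arr hom A' C" by blast
  obtain D where D: "D \<in> Ob" "arr hom A D" "arr hom C D"
    using assms(1) insert.prems C(1) unfolding directed_def by blast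
  have "arr hom A' D" if "A' \<in> S" for A'
    using that insert.prems C D by (intro arr_trans[of A' C D]) auto
  with D show ?case by blast
qed

lemma ramsey_arrow_finite_colours:
  fixes \<chi> :: "'m \<Rightarrow> 'c"
  assumes "A \<in> Ob" "B \<in> Ob" "C \<in> Ob" "ramsey_arrow hom cmp C B A k t"
    and "\<chi> ` hom A C \<subseteq> X" "finite X" "card X \<le> k"
  shows "\<exists>w\<in>hom B C. card (\<chi> ` cmp w ` hom A B) \<le> t"
proof -
  obtain f where f: "bij_betw f X {..<card X}"
    using ex_bij_betw_finite_nat[OF \<open>finite X\<close>] unfolding atLeast0LessThan ..
  have image_f_\<chi>: "(f \<circ> \<chi>) ` S = f ` \<chi> ` S" for S
    by (rule image_comp[symmetric])
  have "(f \<circ> \<chi>) ` hom A C \<subseteq> f ` X"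
    unfolding image_f_\<chi> using assms(5) by (rule image_mono)
  also have "\<dots> = {..<card X}"
    using f by (simp add: bij_betw_def)
  also have "\<dots> \<subseteq> {..<k}"
    using assms(7) by simp
  finally obtain w where w: "w \<in> hom B C" and card: "card ((f \<circ> \<chi>) ` cmp w ` hom A B) \<le> t"
    using assms(4)[unfolded ramsey_arrow_def, rule_format, of "f \<circ> \<chi>"] by blast
  have "\<chi> ` cmp w ` hom A B \<subseteq> X"
    using image_mono[OF comp_image_hom[OF assms(1-3) w]] assms(5) by (rule order_trans)
  then have "inj_on f (\<chi> ` cmp w ` hom A B)"
    by (rule inj_on_subset[OF bij_betw_imp_inj_on[OF f]])
  then have "card ((f \<circ> \<chi>) ` cmp w ` hom A B) = card (\<chi> ` cmp w ` hom A B)"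
    unfolding image_f_\<chi> by (rule card_image)
  with card have "card (\<chi> ` cmp w ` hom A B) \<le> t"
    by linarith
  with w show ?thesis by blast
qed

lemma forces_colours_below_degree:
  assumes "A \<in> Ob" "enat s \<le> ramsey_degree Ob hom cmp A"
  shows "\<exists>k. \<exists>B\<in>Ob. forces_colours Ob hom cmp A B k s"
proof (cases "s \<le> 1")
  case True
  have "forces_colours Ob hom cmp A A 1 s"
    unfolding forces_colours_def
  proof (intro ballI exI[of _ "\<lambda>_. 0::nat"] conjI)
    fix C
    show "(\<lambda>_. 0::nat) ` hom A C \<subseteq> {..<1}"
      by auto
    show "s \<le> card ((\<lambda>_. 0::nat) ` cmp w ` hom A A)" if "w \<in> hom A C" for w
    proof -
      have "(\<lambda>_. 0::nat) ` cmp w ` hom A A = {0}"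
        by (rule image_constant[OF imageI[OF id_in_hom[OF assms(1)]]])
      with True show ?thesis by simp
    qed
  qed
  with assms(1) show ?thesis by blast
next
  case False
  have "\<not> ramsey_good Ob hom cmp A (s - 1)"
  proof
    assume "ramsey_good Ob hom cmp A (s - 1)"
    then have "ramsey_degree Ob hom cmp A \<le> enat (s - 1)"
      using False by (intro ramsey_degree_le) auto
    with assms(2) have "enat s \<le> enat (s - 1)" by (rule order_trans)
    with False show False by simp
  qed
  moreover have "Suc (s - 1) = s"
    using False by simp
  ultimately show ?thesis
    using not_ramsey_good_forces_colours[of Ob hom cmp A "s - 1"] by simp
qed

lemma forces_colours_extend:
  assumes "A \<in> Ob" "B0 \<in> Ob" "B \<in> Ob" "arr hom B0 B" "forces_colours Ob hom cmp A B0 k s"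
  shows "forces_colours Ob hom cmp A B k s"
  unfolding forces_colours_def
proof
  fix C assume C: "C \<in> Ob"
  obtain g where g: "g \<in> hom B0 B" using assms(4) unfolding arr_def by blast
  obtain \<chi> :: "'m \<Rightarrow> nat" where \<chi>: "\<chi> ` hom A C \<subseteq> {..<k}"
    and forced: "\<forall>w\<in>hom B0 C. s \<le> card (\<chi> ` cmp w ` hom A B0)"
    using assms(5) C unfolding forces_colours_def by blast
  have "s \<le> card (\<chi> ` cmp w ` hom A B)" if w: "w \<in> hom B C" for w
  proof -
    have "cmp (cmp w g) ` hom A B0 \<subseteq> cmp w ` hom A B"
    proof (rule image_subsetI)
      fix f assume "f \<in> hom A B0"
      then show "cmp (cmp w g) f \<in> cmp w ` hom A B"
        using comp_assoc[OF assms(1,2,3) C _ g w] comp_in_hom[OF assms(1,2,3) _ g]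
        by (metis image_eqI)
    qed
    moreover have "\<chi> ` cmp w ` hom A B \<subseteq> {..<k}"
      using \<chi> comp_image_hom[OF assms(1,3) C w] by blast
    then have "finite (\<chi> ` cmp w ` hom A B)"
      by (rule finite_subset) simp
    ultimately have "card (\<chi> ` cmp (cmp w g) ` hom A B0) \<le> card (\<chi> ` cmp w ` hom A B)"
      by (intro card_mono image_mono)
    moreover have "s \<le> card (\<chi> ` cmp (cmp w g) ` hom A B0)"
      using forced comp_in_hom[OF assms(2,3) C g w] by blast
    ultimately show ?thesis by linarith
  qed
  with \<chi> show "\<exists>\<chi>::'m \<Rightarrow> nat. \<chi> ` hom A C \<subseteq> {..<k} \<and>
      (\<forall>w\<in>hom B C. s \<le> card (\<chi> ` cmp w ` hom A B))"
    by (intro exI[of _ \<chi>]) simp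
qed

lemma multi_ramsey_arrow_empty: "B \<in> Ob \<Longrightarrow> multi_ramsey_arrow hom cmp B B {} k 0"
  unfolding multi_ramsey_arrow_def using id_in_hom by auto

lemma comp_image_UN_insert_subset:
  assumes A: "A \<in> Ob" and As: "As \<subseteq> Ob" and B: "B \<in> Ob" and C1: "C1 \<in> Ob" and C: "C \<in> Ob"
    and v: "v \<in> hom B C1" and u: "u \<in> hom C1 C"
  shows "cmp (cmp u v) ` (\<Union>A'\<in>insert A As. hom A' B)
    \<subseteq> cmp u ` hom A C1 \<union> cmp u ` cmp v ` (\<Union>A'\<in>As. hom A' B)"
proof (rule image_subsetI)
  fix e assume "e \<in> (\<Union>A'\<in>insert A As. hom A' B)"
  then obtain A' where A': "A' \<in> insert A As" and e: "e \<in> hom A' B"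
    by blast
  have "A' \<in> Ob" using A' A As by auto
  then have eq: "cmp (cmp u v) e = cmp u (cmp v e)" and ve: "cmp v e \<in> hom A' C1"
    using comp_assoc[OF _ B C1 C e v u] comp_in_hom[OF _ B C1 e v] by auto
  from A' consider "A' = A" | "A' \<in> As" by blast
  then show "cmp (cmp u v) e \<in> cmp u ` hom A C1 \<union> cmp u ` cmp v ` (\<Union>A'\<in>As. hom A' B)"
  proof cases
    case 1
    with ve show ?thesis unfolding eq by (intro UnI1 imageI) simp
  next
    case 2
    with e show ?thesis unfolding eq by (intro UnI2 imageI UN_I)
  qed
qed

lemma multi_ramsey_arrow_insert:
  assumes A: "A \<in> Ob" and As: "As \<subseteq> Ob" and B: "B \<in> Ob" and C1: "C1 \<in> Ob" and C: "C \<in> Ob"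
    and multi: "multi_ramsey_arrow hom cmp C1 B As k t"
    and arrow: "ramsey_arrow hom cmp C C1 A k s"
  shows "multi_ramsey_arrow hom cmp C B (insert A As) k (s + t)"
  unfolding multi_ramsey_arrow_def
proof (intro allI impI)
  fix \<chi> :: "'m \<Rightarrow> nat"
  assume \<chi>: "\<chi> ` (\<Union>A'\<in>insert A As. hom A' C) \<subseteq> {..<k}"
  then have "\<chi> ` hom A C \<subseteq> {..<k}"
    by auto
  then obtain u where u: "u \<in> hom C1 C" and u_card: "card (\<chi> ` cmp u ` hom A C1) \<le> s"
    using arrow unfolding ramsey_arrow_def by blast
  have u_maps: "cmp u ` hom A' C1 \<subseteq> hom A' C" if "A' \<in> insert A As" for A'
    using comp_image_hom[OF _ C1 C u] that A As by auto
  have u_colours: "(\<lambda>e. \<chi> (cmp u e)) ` (\<Union>A'\<in>As. hom A' C1) \<subseteq> {..<k}"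
    using u_maps \<chi> by fastforce
  then obtain v where v: "v \<in> hom B C1"
    and v_card: "card ((\<lambda>e. \<chi> (cmp u e)) ` cmp v ` (\<Union>A'\<in>As. hom A' B)) \<le> t"
    using multi unfolding multi_ramsey_arrow_def by blast
  have v_maps: "cmp v ` (\<Union>A'\<in>As. hom A' B) \<subseteq> (\<Union>A'\<in>As. hom A' C1)"
    using comp_in_hom[OF _ B C1 _ v] As by fastforce
  let ?old = "\<chi> ` cmp u ` hom A C1"
  let ?new = "(\<lambda>e. \<chi> (cmp u e)) ` cmp v ` (\<Union>A'\<in>As. hom A' B)"
  have "\<chi> ` cmp (cmp u v) ` (\<Union>A'\<in>insert A As. hom A' B) \<subseteq> ?old \<union> ?new"
    using image_mono[OF comp_image_UN_insert_subset[OF A As B C1 C v u], of \<chi>]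
    by (simp only: image_Un image_image)
  moreover have "?old \<subseteq> {..<k}"
    using image_mono[OF u_maps[OF insertI1]] \<open>\<chi> ` hom A C \<subseteq> {..<k}\<close> by (rule order_trans)
  moreover have "?new \<subseteq> {..<k}"
    using image_mono[OF v_maps] u_colours by (rule order_trans)
  ultimately have "card (\<chi> ` cmp (cmp u v) ` (\<Union>A'\<in>insert A As. hom A' B))
      \<le> card ?old + card ?new"
    by (meson card_Un_le card_mono finite_UnI finite_lessThan finite_subset order_trans)
  moreover have "cmp u v \<in> hom B C"
    using comp_in_hom[OF B C1 C v u] .
  ultimately show "\<exists>w\<in>hom B C. card (\<chi> ` cmp w ` (\<Union>A'\<in>insert A As. hom A' B)) \<le> s + t"
    using u_card v_card by (meson add_mono order_trans)
qed

lemma ex_multi_ramsey_arrow: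
  assumes "finite As" "As \<subseteq> Ob" "\<forall>A\<in>As. ramsey_good Ob hom cmp A (t A)" "2 \<le> k" "B \<in> Ob"
  shows "\<exists>C\<in>Ob. multi_ramsey_arrow hom cmp C B As k (sum t As)"
  using assms(1-3)
proof (induction As rule: finite_induct)
  case empty
  then show ?case using assms(5) multi_ramsey_arrow_empty by auto
next
  case (insert A As)
  then obtain C1 where C1: "C1 \<in> Ob" "multi_ramsey_arrow hom cmp C1 B As k (sum t As)"
    by auto
  moreover have "ramsey_good Ob hom cmp A (t A)"
    using insert.prems(2) by simp
  then obtain C where "C \<in> Ob" "ramsey_arrow hom cmp C C1 A k (t A)"
    using assms(4) C1(1) unfolding ramsey_good_def by blast
  ultimately show ?case
    using multi_ramsey_arrow_insert[of A As B C1 C k "sum t As" "t A"] insert assms(5) by auto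
qed

end

locale expansion_with_unique_restrictions =
  fixes Ob :: "'o set" and hom :: "'o \<Rightarrow> 'o \<Rightarrow> 'm set"
    and cmp :: "'m \<Rightarrow> 'm \<Rightarrow> 'm" and idm :: "'o \<Rightarrow> 'm"
    and Ob' :: "'p set" and hom' :: "'p \<Rightarrow> 'p \<Rightarrow> 'm set" and U :: "'p \<Rightarrow> 'o"
  assumes expansion: "expansion Ob hom cmp idm Ob' hom' U"
    and unique_restrictions: "unique_restrictions Ob hom Ob' hom' U"
begin

sublocale C: cat Ob hom cmp idm
  using expansion by (simp add: expansion_def cat_def)

sublocale E: cat Ob' hom' cmp "\<lambda>a. idm (U a)"
  using expansion by (simp add: expansion_def cat_def)

lemma U_in_Ob: "a \<in> Ob' \<Longrightarrow> U a \<in> Ob"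
  using expansion unfolding expansion_def by blast

lemma ex_in_fiber: "A \<in> Ob \<Longrightarrow> \<exists>a. a \<in> fiber Ob' U A"
  using expansion unfolding expansion_def fiber_def by blast

lemma hom'_subset: "a \<in> Ob' \<Longrightarrow> b \<in> Ob' \<Longrightarrow> hom' a b \<subseteq> hom (U a) (U b)"
  using expansion unfolding expansion_def by blast

lemma ex1_restriction:
  "\<lbrakk>A \<in> Ob; c \<in> Ob'; e \<in> hom A (U c)\<rbrakk> \<Longrightarrow> \<exists>!a. a \<in> fiber Ob' U A \<and> e \<in> hom' a c"
  using unique_restrictions unfolding unique_restrictions_def by blast

lemma UN_fiber_hom:
  assumes "A \<in> Ob" "b \<in> Ob'"
  shows "(\<Union>a\<in>fiber Ob' U A. hom' a b) = hom A (U b)"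
proof
  show "(\<Union>a\<in>fiber Ob' U A. hom' a b) \<subseteq> hom A (U b)"
    using hom'_subset[OF _ assms(2)] unfolding fiber_def by blast
  show "hom A (U b) \<subseteq> (\<Union>a\<in>fiber Ob' U A. hom' a b)"
    using ex1_restriction[OF assms] by blast
qed

definition restriction :: "'o \<Rightarrow> 'p \<Rightarrow> 'm \<Rightarrow> 'p" where
  "restriction A c e = (THE a. a \<in> fiber Ob' U A \<and> e \<in> hom' a c)"

lemma restriction:
  assumes "A \<in> Ob" "c \<in> Ob'" "e \<in> hom A (U c)"
  shows "restriction A c e \<in> fiber Ob' U A" "e \<in> hom' (restriction A c e) c"
  using theI'[OF ex1_restriction[OF assms]] unfolding restriction_def by auto

lemma restriction_eq:
  assumes "a \<in> fiber Ob' U A" "c \<in> Ob'" "e \<in> hom' a c"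
  shows "restriction A c e = a"
proof -
  have a: "a \<in> Ob'" "U a = A" using assms(1) unfolding fiber_def by auto
  then have "A \<in> Ob" "e \<in> hom A (U c)"
    using U_in_Ob[OF a(1)] hom'_subset[OF a(1) assms(2)] assms(3) by auto
  then show ?thesis
    unfolding restriction_def using assms(1,3) by (intro the1_equality ex1_restriction assms(2)) auto
qed

lemma ex_glued_colouring:
  assumes A: "A \<in> Ob" and c: "c \<in> Ob'" and G: "G \<subseteq> fiber Ob' U A"
    and \<chi>: "\<forall>a\<in>G. \<chi> a ` hom' a c \<subseteq> {..<k a}"
  obtains \<xi> where "\<xi> ` hom A (U c) \<subseteq> insert None (Some ` (SIGMA a:G. {..<k a}))"
    and "\<And>a e. a \<in> G \<Longrightarrow> e \<in> hom' a c \<Longrightarrow> \<xi> e = Some (a, \<chi> a e)"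
proof -
  define \<xi> where
    "\<xi> e = (let a = restriction A c e in if a \<in> G then Some (a, \<chi> a e) else None)" for e
  have \<xi>_eq: "\<xi> e = Some (a, \<chi> a e)" if "a \<in> G" "e \<in> hom' a c" for a e
    using restriction_eq[of a A c e] that G c unfolding \<xi>_def by auto
  have \<xi>_img: "\<xi> ` hom A (U c) \<subseteq> insert None (Some ` (SIGMA a:G. {..<k a}))"
  proof (rule image_subsetI)
    fix e assume e: "e \<in> hom A (U c)"
    let ?a = "restriction A c e"
    show "\<xi> e \<in> insert None (Some ` (SIGMA a:G. {..<k a}))"
    proof (cases "?a \<in> G")
      case True
      have "e \<in> hom' ?a c" using restriction(2)[OF A c e] .
      with True have "\<chi> ?a e < k ?a" using \<chi> by blast
      with True show ?thesis unfolding \<xi>_eq[OF True \<open>e \<in> hom' ?a c\<close>] by blast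
    qed (simp add: \<xi>_def)
  qed
  show thesis by (rule that[OF \<xi>_img \<xi>_eq])
qed

lemma ex_expanded_copy:
  assumes b: "b \<in> Ob'" and c: "c \<in> Ob'" and D: "D \<in> Ob"
    and ep: "\<forall>b'\<in>fiber Ob' U (U b). \<forall>d\<in>fiber Ob' U D. arr hom' b' d"
    and w: "w \<in> hom D (U c)"
  obtains v where "v \<in> hom' b c" "\<And>a. a \<in> Ob' \<Longrightarrow> cmp v ` hom' a b \<subseteq> cmp w ` hom (U a) D"
proof -
  obtain d where d: "d \<in> fiber Ob' U D" "w \<in> hom' d c"
    using restriction[OF D c w] by blast
  then have d_Ob': "d \<in> Ob'" "U d = D" unfolding fiber_def by auto
  obtain f where f: "f \<in> hom' b d"
    using ep b d(1) unfolding arr_def fiber_def by blast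
  show thesis
  proof (rule that[of "cmp w f"])
    show "cmp w f \<in> hom' b c"
      using E.comp_in_hom[OF b d_Ob'(1) c f d(2)] .
    fix a assume a: "a \<in> Ob'"
    show "cmp (cmp w f) ` hom' a b \<subseteq> cmp w ` hom (U a) D"
    proof (rule image_subsetI)
      fix e assume e: "e \<in> hom' a b"
      have "cmp f e \<in> hom (U a) D"
        using hom'_subset[OF a d_Ob'(1)] E.comp_in_hom[OF a b d_Ob'(1) e f] d_Ob'(2) by blast
      moreover have "cmp (cmp w f) e = cmp w (cmp f e)"
        using E.comp_assoc[OF a b d_Ob'(1) c e f d(2)] by simp
      ultimately show "cmp (cmp w f) e \<in> cmp w ` hom (U a) D"
        by (metis image_eqI)
    qed
  qed
qed

lemma ramsey_arrow_if_multi_ramsey_arrow: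
  assumes "A \<in> Ob" "b \<in> Ob'" "c \<in> Ob'" "multi_ramsey_arrow hom' cmp c b (fiber Ob' U A) k t"
  shows "ramsey_arrow hom cmp (U c) (U b) A k t"
  using assms(4) hom'_subset[OF assms(2,3)]
  unfolding multi_ramsey_arrow_def ramsey_arrow_def
    UN_fiber_hom[OF assms(1,2)] UN_fiber_hom[OF assms(1,3)]
  by blast

lemma ramsey_good_sum_fiber:
  assumes A: "A \<in> Ob" and fin: "finite (fiber Ob' U A)"
    and good: "\<forall>a\<in>fiber Ob' U A. ramsey_good Ob' hom' cmp a (t a)"
  shows "ramsey_good Ob hom cmp A (sum t (fiber Ob' U A))"
  unfolding ramsey_good_def
proof (intro allI impI ballI)
  fix k :: nat and B assume k: "2 \<le> k" and "B \<in> Ob"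
  then obtain b where b: "b \<in> Ob'" "U b = B"
    using expansion unfolding expansion_def by blast
  have "fiber Ob' U A \<subseteq> Ob'" unfolding fiber_def by blast
  then obtain c where
    "c \<in> Ob'" "multi_ramsey_arrow hom' cmp c b (fiber Ob' U A) k (sum t (fiber Ob' U A))"
    using E.ex_multi_ramsey_arrow[OF fin _ good k b(1)] by blast
  then show "\<exists>C\<in>Ob. ramsey_arrow hom cmp C B A k (sum t (fiber Ob' U A))"
    using ramsey_arrow_if_multi_ramsey_arrow[OF A b(1)] U_in_Ob b(2) by blast
qed

lemma ramsey_degree_le_esum:
  assumes A: "A \<in> Ob" and fin: "esum (ramsey_degree Ob' hom' cmp) (fiber Ob' U A) < \<infinity>"
  shows "ramsey_degree Ob hom cmp A \<le> esum (ramsey_degree Ob' hom' cmp) (fiber Ob' U A)"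
proof -
  let ?F = "fiber Ob' U A" and ?d = "ramsey_degree Ob' hom' cmp"
  define s where "s a = the_enat (?d a)" for a
  have F: "finite ?F" "\<forall>a\<in>?F. ?d a < \<infinity>"
    using fin unfolding esum_less_infinity_iff by auto
  then have d: "?d a = enat (s a)" if "a \<in> ?F" for a
    using that unfolding s_def by auto
  then have "\<forall>a\<in>?F. ramsey_good Ob' hom' cmp a (s a)"
    using ramsey_degree_enatD(2) by metis
  then have "ramsey_good Ob hom cmp A (sum s ?F)"
    by (rule ramsey_good_sum_fiber[OF A F(1)])
  moreover obtain a where a: "a \<in> ?F" using ex_in_fiber[OF A] by blast
  then have "0 < sum s ?F"
    using ramsey_degree_enatD(1)[OF d[OF a]] member_le_sum[OF a _ F(1), of s] by simp
  ultimately have "ramsey_degree Ob hom cmp A \<le> enat (sum s ?F)"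
    by (rule ramsey_degree_le[rotated])
  also have "\<dots> = esum ?d ?F"
    unfolding esum_eq_enat_sum[OF F] s_def ..
  finally show ?thesis .
qed

end

locale directed_ep_expansion = expansion_with_unique_restrictions +
  assumes expansion_property: "expansion_property Ob Ob' hom' U"
    and directed: "directed Ob' hom'"
begin

lemma sum_le_if_forces_colours:
  assumes A: "A \<in> Ob" and good: "ramsey_good Ob hom cmp A n"
    and G: "finite G" "G \<subseteq> fiber Ob' U A" and b: "b \<in> Ob'"
    and forces: "\<forall>a\<in>G. forces_colours Ob' hom' cmp a b (k a) (s a)"
  shows "sum s G \<le> n"
proof -
  have G_Ob': "a \<in> Ob'" "U a = A" if "a \<in> G" for a
    using G(2) that unfolding fiber_def by auto
  have "\<forall>a\<in>G. \<exists>\<chi>a. \<forall>c\<in>Ob'. \<chi>a c ` hom' a c \<subseteq> {..<k a} \<and>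
      (\<forall>w\<in>hom' b c. s a \<le> card (\<chi>a c ` cmp w ` hom' a b))"
    using forces unfolding forces_colours_def by (auto intro!: bchoice)
  from bchoice[OF this] obtain \<chi> where \<chi>: "\<forall>a\<in>G. \<forall>c\<in>Ob'.
      \<chi> a c ` hom' a c \<subseteq> {..<k a} \<and> (\<forall>w\<in>hom' b c. s a \<le> card (\<chi> a c ` cmp w ` hom' a b))"
    by blast
  define X where "X = insert None (Some ` (SIGMA a:G. {..<k a}))"
  have X: "finite X" using G(1) unfolding X_def by auto
  obtain D where D: "D \<in> Ob" "\<forall>b'\<in>fiber Ob' U (U b). \<forall>d\<in>fiber Ob' U D. arr hom' b' d"
    using expansion_property U_in_Ob[OF b] unfolding expansion_property_def by blast
  obtain C where C: "C \<in> Ob" "ramsey_arrow hom cmp C D A (max 2 (card X)) n"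
    using good D(1) unfolding ramsey_good_def by (meson max.cobounded1)
  obtain c where c: "c \<in> Ob'" "U c = C"
    using expansion C(1) unfolding expansion_def by blast
  obtain \<xi> where \<xi>_X: "\<xi> ` hom A C \<subseteq> X"
    and \<xi>_eq: "\<And>a e. a \<in> G \<Longrightarrow> e \<in> hom' a c \<Longrightarrow> \<xi> e = Some (a, \<chi> a c e)"
    using ex_glued_colouring[OF A c(1) G(2), of "\<lambda>a. \<chi> a c" k] \<chi> c unfolding X_def by blast
  obtain w where w: "w \<in> hom D C" and w_card: "card (\<xi> ` cmp w ` hom A D) \<le> n"
    using C.ramsey_arrow_finite_colours[OF A D(1) C(1) C(2) \<xi>_X X] by auto
  obtain v where v: "v \<in> hom' b c"
    and copy: "\<And>a. a \<in> Ob' \<Longrightarrow> cmp v ` hom' a b \<subseteq> cmp w ` hom (U a) D"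
    using ex_expanded_copy[OF b c(1) D] w c(2) by blast
  have finite_colours: "finite (\<xi> ` cmp w ` hom A D)"
    using image_mono[OF C.comp_image_hom[OF A D(1) C(1) w]] \<xi>_X X
    by (meson finite_subset order_trans)
  have "sum s G \<le> (\<Sum>a\<in>G. card (\<chi> a c ` cmp v ` hom' a b))"
    using \<chi> c(1) v by (intro sum_mono) blast
  also have "\<dots> \<le> card (\<xi> ` cmp w ` hom A D)"
  proof (intro sum_card_le_card_tagged[OF finite_colours G(1)] ballI)
    fix a assume a: "a \<in> G"
    have v_maps: "cmp v ` hom' a b \<subseteq> hom' a c"
      using E.comp_image_hom[OF G_Ob'(1)[OF a] b c(1) v] .
    have "(\<lambda>y. Some (a, y)) ` \<chi> a c ` cmp v ` hom' a b = (\<lambda>e. Some (a, \<chi> a c e)) ` cmp v ` hom' a b"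
      by (rule image_image)
    also have "\<dots> = \<xi> ` cmp v ` hom' a b"
    proof (rule image_cong[OF refl])
      fix e assume "e \<in> cmp v ` hom' a b"
      then show "Some (a, \<chi> a c e) = \<xi> e"
        using \<xi>_eq[OF a subsetD[OF v_maps]] by simp
    qed
    also have "\<dots> \<subseteq> \<xi> ` cmp w ` hom A D"
      using image_mono[OF copy[OF G_Ob'(1)[OF a]]] G_Ob'(2)[OF a] by simp
    finally show "(\<lambda>y. Some (a, y)) ` \<chi> a c ` cmp v ` hom' a b \<subseteq> \<xi> ` cmp w ` hom A D" .
  qed
  also have "\<dots> \<le> n"
    by (rule w_card)
  finally show ?thesis .
qed

lemma sum_le_if_ramsey_good:
  assumes A: "A \<in> Ob" and good: "ramsey_good Ob hom cmp A n"
    and G: "finite G" "G \<subseteq> fiber Ob' U A"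
    and s: "\<forall>a\<in>G. enat (s a) \<le> ramsey_degree Ob' hom' cmp a"
  shows "sum s G \<le> n"
proof -
  have G_Ob': "G \<subseteq> Ob'" using G(2) unfolding fiber_def by blast
  have "\<forall>a\<in>G. \<exists>k. \<exists>B\<in>Ob'. forces_colours Ob' hom' cmp a B k (s a)"
    using E.forces_colours_below_degree G_Ob' s by blast
  from bchoice[OF this] obtain k
    where "\<forall>a\<in>G. \<exists>B. B \<in> Ob' \<and> forces_colours Ob' hom' cmp a B (k a) (s a)"
    by blast
  from bchoice[OF this] obtain B
    where B: "\<forall>a\<in>G. B a \<in> Ob' \<and> forces_colours Ob' hom' cmp a (B a) (k a) (s a)"
    by blast
  have "Ob' \<noteq> {}" using ex_in_fiber[OF A] unfolding fiber_def by blast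
  then obtain b where b: "b \<in> Ob'" "\<forall>b'\<in>B ` G. arr hom' b' b"
    using E.directed_ex_common_target[OF directed, of "B ` G"] G(1) B by blast
  have "\<forall>a\<in>G. forces_colours Ob' hom' cmp a b (k a) (s a)"
    using E.forces_colours_extend B b G_Ob' by blast
  then show ?thesis
    by (rule sum_le_if_forces_colours[OF A good G b(1)])
qed

lemma esum_fiber_le_if_ramsey_good:
  assumes A: "A \<in> Ob" and good: "ramsey_good Ob hom cmp A n"
  shows "esum (ramsey_degree Ob' hom' cmp) (fiber Ob' U A) \<le> enat n"
proof -
  let ?F = "fiber Ob' U A" and ?d = "ramsey_degree Ob' hom' cmp"
  have fin: "finite ?F"
  proof (rule ccontr)
    assume "infinite ?F"
    then obtain G where G: "finite G" "card G = Suc n" "G \<subseteq> ?F"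
      using infinite_arbitrarily_large by blast
    have "\<forall>a\<in>G. enat (Suc 0) \<le> ?d a"
      unfolding Suc_ile_eq enat_0 by (intro ballI ramsey_degree_pos)
    then have "sum (\<lambda>_. Suc 0) G \<le> n"
      by (rule sum_le_if_ramsey_good[OF A good G(1,3)])
    with G(2) show False by simp
  qed
  have fin_degrees: "\<forall>a\<in>?F. ?d a < \<infinity>"
  proof
    fix a assume a: "a \<in> ?F"
    show "?d a < \<infinity>"
    proof (rule ccontr)
      assume "\<not> ?d a < \<infinity>"
      then have "\<forall>a'\<in>{a}. enat (Suc n) \<le> ?d a'" by simp
      from sum_le_if_ramsey_good[OF A good _ _ this] a show False by simp
    qed
  qed
  have "esum ?d ?F = enat (\<Sum>a\<in>?F. the_enat (?d a))"
    by (rule esum_eq_enat_sum[OF fin fin_degrees])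
  also have "\<dots> \<le> enat n"
  proof -
    have "\<forall>a\<in>?F. enat (the_enat (?d a)) \<le> ?d a"
      using fin_degrees by auto
    from sum_le_if_ramsey_good[OF A good fin subset_refl this] show ?thesis
      by simp
  qed
  finally show ?thesis .
qed

lemma ramsey_degree_eq_esum:
  assumes "A \<in> Ob"
  shows "ramsey_degree Ob hom cmp A = esum (ramsey_degree Ob' hom' cmp) (fiber Ob' U A)"
proof (cases "ramsey_degree Ob hom cmp A")
  case (enat n)
  then have "esum (ramsey_degree Ob' hom' cmp) (fiber Ob' U A) \<le> enat n"
    using esum_fiber_le_if_ramsey_good[OF assms ramsey_degree_enatD(2)] by blast
  moreover from this have "esum (ramsey_degree Ob' hom' cmp) (fiber Ob' U A) < \<infinity>"
    by (rule order.strict_trans1) simp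
  then have "ramsey_degree Ob hom cmp A \<le> esum (ramsey_degree Ob' hom' cmp) (fiber Ob' U A)"
    by (rule ramsey_degree_le_esum[OF assms])
  ultimately show ?thesis using enat by simp
next
  case infinity
  then show ?thesis
    using ramsey_degree_le_esum[OF assms]
    by (cases "esum (ramsey_degree Ob' hom' cmp) (fiber Ob' U A)") auto
qed

end

theorem theorem6p3:
  fixes Ob :: "'o set" and hom :: "'o \<Rightarrow> 'o \<Rightarrow> 'm set"
    and cmp :: "'m \<Rightarrow> 'm \<Rightarrow> 'm" and idm :: "'o \<Rightarrow> 'm"
    and Ob' :: "'p set" and hom' :: "'p \<Rightarrow> 'p \<Rightarrow> 'm set" and U :: "'p \<Rightarrow> 'o"
  assumes "expansion Ob hom cmp idm Ob' hom' U"
    and "reasonable Ob hom Ob' hom' U"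
    and "unique_restrictions Ob hom Ob' hom' U"
    and "expansion_property Ob Ob' hom' U"
    and "all_mono Ob hom cmp"
    and "directed Ob' hom'"
    and "A \<in> Ob"
  shows "ramsey_degree Ob hom cmp A
           = esum (\<lambda>a. ramsey_degree Ob' hom' cmp a) (fiber Ob' U A)
     \<and> (ramsey_degree Ob hom cmp A < \<infinity> \<longleftrightarrow>
          finite (fiber Ob' U A) \<and> (\<forall>a\<in>fiber Ob' U A. ramsey_degree Ob' hom' cmp a < \<infinity>))"
proof -
  interpret directed_ep_expansion Ob hom cmp idm Ob' hom' U
    using assms by (simp add: directed_ep_expansion_def directed_ep_expansion_axioms_def
        expansion_with_unique_restrictions_def)
  show ?thesis
    using ramsey_degree_eq_esum[OF \<open>A \<in> Ob\<close>] by (simp only: esum_less_infinity_iff)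
qed

end
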